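(* Fix $k\in\mathbb{N}$ and let $Q$ be a class of $k$-degenerate graphs (closed under isomorphism). Then $P_Q$ is weakly distinguishing.
   Context: All graphs are finite and simple. A graph is $k$-degenerate if every induced subgraph has a vertex of degree at most $k$. For a class $Q$, $P_Q(G;X)=\sum_{A\subseteq V(G):\, G[A]\in Q}X^{|A|}$, where $G[A]$ is the induced subgraph on $A$. A graph $G$ is $P$-unique if every graph $H$ with $P(G)=P(H)$ is isomorphic to $G$. With $\mathcal{G}(n)$ the set of isomorphism classes of graphs on $n$ vertices and $U_P(n)$ the $P$-unique graphs in $\mathcal{G}(n)$, $P$ is weakly distinguishing if $\lim_{n\to\infty}|U_P(n)|/|\mathcal{G}(n)|=0$. *)

theory Defs
  imports Complex_Main "HOL-Computational_Algebra.Polynomial"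
begin

text \<open>A graph is a pair (V, E) of a finite vertex set of naturals and a symmetric,
  irreflexive edge relation on V. Every finite simple graph is isomorphic to one of these.\<close>
type_synonym graph = "nat set \<times> (nat \<times> nat) set"

definition wf_graph :: "graph \<Rightarrow> bool" where
  "wf_graph G \<longleftrightarrow> finite (fst G) \<and> snd G \<subseteq> fst G \<times> fst G \<and> sym (snd G)
     \<and> (\<forall>v. (v, v) \<notin> snd G)"

definition graph_iso :: "graph \<Rightarrow> graph \<Rightarrow> bool" where
  "graph_iso G H \<longleftrightarrow> (\<exists>f. bij_betw f (fst G) (fst H) \<and>
     (\<forall>u\<in>fst G. \<forall>v\<in>fst G. (u, v) \<in> snd G \<longleftrightarrow> (f u, f v) \<in> snd H))"

definition induced :: "graph \<Rightarrow> nat set \<Rightarrow> graph" where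
  "induced G A = (A, snd G \<inter> (A \<times> A))"

definition degree :: "graph \<Rightarrow> nat \<Rightarrow> nat" where
  "degree G v = card {u. (v, u) \<in> snd G}"

definition k_degenerate :: "nat \<Rightarrow> graph \<Rightarrow> bool" where
  "k_degenerate k G \<longleftrightarrow>
     (\<forall>A. A \<subseteq> fst G \<longrightarrow> A \<noteq> {} \<longrightarrow> (\<exists>v\<in>A. degree (induced G A) v \<le> k))"

definition indpoly :: "graph set \<Rightarrow> graph \<Rightarrow> nat poly" where
  "indpoly Q G = (\<Sum>A\<in>{A. A \<subseteq> fst G \<and> induced G A \<in> Q}. monom 1 (card A))"

definition P_unique :: "(graph \<Rightarrow> 'b) \<Rightarrow> graph \<Rightarrow> bool" where
  "P_unique P G \<longleftrightarrow> (\<forall>H. wf_graph H \<longrightarrow> P H = P G \<longrightarrow> graph_iso G H)"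

definition graphs_on :: "nat \<Rightarrow> graph set" where
  "graphs_on n = {G. wf_graph G \<and> fst G = {0..<n}}"

definition graph_classes :: "nat \<Rightarrow> graph set set" where
  "graph_classes n = (\<lambda>G. {H \<in> graphs_on n. graph_iso G H}) ` graphs_on n"

definition unique_classes :: "(graph \<Rightarrow> 'b) \<Rightarrow> nat \<Rightarrow> graph set set" where
  "unique_classes P n = {c \<in> graph_classes n. \<exists>G\<in>c. P_unique P G}"

definition weakly_distinguishing :: "(graph \<Rightarrow> 'b) \<Rightarrow> bool" where
  "weakly_distinguishing P \<longleftrightarrow>
     (\<lambda>n. real (card (unique_classes P n)) / real (card (graph_classes n))) \<longlonglongrightarrow> 0"

end

(*
  There are at least 2^(n choose 2) / n! isomorphism classes of graphs on n vertices; let m = n div 4.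
  A P_Q-unique class has a representative G which either contains an induced member of Q on at
  least m vertices, or whose polynomial P_Q(G) has degree below m and coefficients at most 2^n.
  Distinct unique classes have distinct polynomials, so the second kind accounts for at most
  (2^n + 1)^m, roughly 2^(n^2/4), classes. In the first kind some m-set B induces a k-degenerate
  graph and hence spans at most k m edges; counting the choices of B, of those few edges, and of
  all edges outside B gives 2^((n choose 2) - (m choose 2) + O(n log n)) graphs. After multiplying
  by n!, both counts are a vanishing fraction of 2^(n choose 2).
*)
theory Submission
  imports Defs "HOL-Combinatorics.Permutations" "HOL-Real_Asymp.Real_Asymp"
begin

lemma graph_iso_refl: "graph_iso G G"
  unfolding graph_iso_def by (rule exI[of _ id]) auto

lemma graph_iso_sym:
  assumes "graph_iso G H"
  shows "graph_iso H G"
proof -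
  obtain f where f: "bij_betw f (fst G) (fst H)"
    and edges: "\<forall>u\<in>fst G. \<forall>v\<in>fst G. (u, v) \<in> snd G \<longleftrightarrow> (f u, f v) \<in> snd H"
    using assms unfolding graph_iso_def by blast
  let ?g = "inv_into (fst G) f"
  have g: "bij_betw ?g (fst H) (fst G)"
    using f by (rule bij_betw_inv_into)
  have "(u, v) \<in> snd H \<longleftrightarrow> (?g u, ?g v) \<in> snd G" if "u \<in> fst H" "v \<in> fst H" for u v
  proof -
    have "?g u \<in> fst G" "?g v \<in> fst G"
      using g that bij_betwE by blast+
    moreover have "f (?g u) = u" "f (?g v) = v"
      using f that by (simp_all add: bij_betw_inv_into_right)
    ultimately show ?thesis
      using edges by metis
  qed
  then show ?thesis
    using g unfolding graph_iso_def by blast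
qed

lemma graph_iso_trans:
  assumes "graph_iso G H" "graph_iso H K"
  shows "graph_iso G K"
proof -
  obtain f where f: "bij_betw f (fst G) (fst H)"
    and ef: "\<forall>u\<in>fst G. \<forall>v\<in>fst G. (u, v) \<in> snd G \<longleftrightarrow> (f u, f v) \<in> snd H"
    using assms(1) unfolding graph_iso_def by blast
  obtain g where g: "bij_betw g (fst H) (fst K)"
    and eg: "\<forall>u\<in>fst H. \<forall>v\<in>fst H. (u, v) \<in> snd H \<longleftrightarrow> (g u, g v) \<in> snd K"
    using assms(2) unfolding graph_iso_def by blast
  have "(u, v) \<in> snd G \<longleftrightarrow> (g (f u), g (f v)) \<in> snd K" if "u \<in> fst G" "v \<in> fst G" for u v
    using ef eg that bij_betwE[OF f] by blast
  then show ?thesis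
    using bij_betw_trans[OF f g] unfolding graph_iso_def by auto
qed

lemma graph_classes_eqI:
  assumes "c \<in> graph_classes n" "d \<in> graph_classes n"
    and "G \<in> c" "H \<in> d" "graph_iso G H"
  shows "c = d"
proof -
  obtain X where X: "c = {K \<in> graphs_on n. graph_iso X K}"
    using assms(1) unfolding graph_classes_def by blast
  obtain Y where Y: "d = {K \<in> graphs_on n. graph_iso Y K}"
    using assms(2) unfolding graph_classes_def by blast
  have "graph_iso X Y"
    using assms(3-5) X Y by (auto intro: graph_iso_trans graph_iso_sym)
  then have "graph_iso X K \<longleftrightarrow> graph_iso Y K" for K
    by (meson graph_iso_sym graph_iso_trans)
  then show ?thesis
    using X Y by auto
qed

lemma finite_graphs_on: "finite (graphs_on n)"
proof -
  have "graphs_on n \<subseteq> {{0..<n}} \<times> Pow ({0..<n} \<times> {0..<n})"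
    unfolding graphs_on_def wf_graph_def by auto
  then show ?thesis
    by (rule finite_subset) auto
qed

lemma graph_iso_graphs_on_obtains_permutation:
  assumes G: "G \<in> graphs_on n" and H: "H \<in> graphs_on n" and iso: "graph_iso G H"
  obtains p where "p permutes {0..<n}" "H = ({0..<n}, map_prod p p ` snd G)"
proof -
  let ?S = "{0..<n}"
  have V: "fst G = ?S" "fst H = ?S" and E: "snd G \<subseteq> ?S \<times> ?S" "snd H \<subseteq> ?S \<times> ?S"
    using G H unfolding graphs_on_def wf_graph_def by auto
  obtain f where f: "bij_betw f ?S ?S"
    and edges: "\<forall>u\<in>?S. \<forall>v\<in>?S. (u, v) \<in> snd G \<longleftrightarrow> (f u, f v) \<in> snd H"
    using iso V unfolding graph_iso_def by auto
  define p where "p x = (if x \<in> ?S then f x else x)" for x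
  have p_bij: "bij_betw p ?S ?S"
    using f unfolding p_def bij_betw_def inj_on_def by auto
  then have "p permutes ?S"
    by (rule bij_imp_permutes) (simp add: p_def)
  moreover have "snd H = map_prod p p ` snd G"
  proof
    show "snd H \<subseteq> map_prod p p ` snd G"
    proof
      fix e assume e: "e \<in> snd H"
      then obtain a b where ab: "e = (a, b)" "a \<in> ?S" "b \<in> ?S"
        using E by auto
      then obtain u v where "u \<in> ?S" "v \<in> ?S" "p u = a" "p v = b"
        using p_bij unfolding bij_betw_def by (metis imageE)
      then show "e \<in> map_prod p p ` snd G"
        using edges e ab by (force simp: p_def)
    qed
    show "map_prod p p ` snd G \<subseteq> snd H"
      using edges E by (auto simp: p_def)
  qed
  ultimately show ?thesis
    using that V(2) by (metis prod.collapse)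
qed

lemma card_iso_class_le_fact:
  assumes "G \<in> graphs_on n"
  shows "card {H \<in> graphs_on n. graph_iso G H} \<le> fact n"
proof -
  let ?relabel = "\<lambda>p. ({0..<n}, map_prod p p ` snd G)"
  have "{H \<in> graphs_on n. graph_iso G H} \<subseteq> ?relabel ` {p. p permutes {0..<n}}"
    using graph_iso_graphs_on_obtains_permutation[OF assms] by blast
  then have "card {H \<in> graphs_on n. graph_iso G H} \<le> card (?relabel ` {p. p permutes {0..<n}})"
    by (rule card_mono[rotated]) (simp add: finite_permutations)
  also have "\<dots> \<le> card {p. p permutes {0..<n}}"
    by (rule card_image_le) (simp add: finite_permutations)
  also have "\<dots> = fact n"
    by (simp add: card_permutations)
  finally show ?thesis .
qed

definition upper_pairs :: "nat set \<Rightarrow> (nat \<times> nat) set" where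
  "upper_pairs B = {(u, v). u \<in> B \<and> v \<in> B \<and> u < v}"

lemma finite_upper_pairs: "finite B \<Longrightarrow> finite (upper_pairs B)"
  unfolding upper_pairs_def by (rule finite_subset[of _ "B \<times> B"]) auto

lemma upper_pairs_mono: "A \<subseteq> B \<Longrightarrow> upper_pairs A \<subseteq> upper_pairs B"
  unfolding upper_pairs_def by auto

lemma card_upper_pairs:
  assumes "finite B"
  shows "2 * card (upper_pairs B) + card B = card B * card B"
proof -
  let ?lower = "{(u, v). u \<in> B \<and> v \<in> B \<and> v < u}"
  let ?diag = "{(u, v). u \<in> B \<and> v \<in> B \<and> u = v}"
  have fin: "finite ?lower" "finite ?diag" "finite (upper_pairs B)"
    using assms finite_upper_pairs by (auto intro: finite_subset[of _ "B \<times> B"])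
  have "card ?lower = card (upper_pairs B)"
    by (rule bij_betw_same_card[of "\<lambda>(u, v). (v, u)"])
      (auto simp: bij_betw_def inj_on_def upper_pairs_def image_def)
  moreover have "card ?diag = card B"
    by (rule bij_betw_same_card[of fst]) (auto simp: bij_betw_def inj_on_def image_def)
  moreover have "B \<times> B = (upper_pairs B \<union> ?lower) \<union> ?diag"
    unfolding upper_pairs_def by auto
  then have "card (B \<times> B) = card (upper_pairs B) + card ?lower + card ?diag"
    using fin by (simp add: card_Un_disjoint upper_pairs_def disjoint_iff)
  ultimately show ?thesis
    by (simp add: card_cartesian_product)
qed

lemma edges_eq_upper_edges_sym:
  assumes "G \<in> graphs_on n"
  shows "snd G = (snd G \<inter> upper_pairs {0..<n}) \<union> (snd G \<inter> upper_pairs {0..<n})\<inverse>"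
proof -
  have "snd G \<subseteq> {0..<n} \<times> {0..<n}" "sym (snd G)" "\<forall>v. (v, v) \<notin> snd G"
    using assms unfolding graphs_on_def wf_graph_def by auto
  then show ?thesis
    unfolding upper_pairs_def sym_def by auto (metis linorder_neqE_nat)
qed

lemma card_graphs_on_ge: "2 ^ card (upper_pairs {0..<n}) \<le> card (graphs_on n)"
proof -
  let ?U = "upper_pairs {0..<n}"
  let ?graph = "\<lambda>E. ({0..<n::nat}, E \<union> E\<inverse>)"
  have "inj_on ?graph (Pow ?U)"
  proof (rule inj_onI)
    fix E F assume "E \<in> Pow ?U" "F \<in> Pow ?U" "?graph E = ?graph F"
    then have "E = (E \<union> E\<inverse>) \<inter> ?U" "F = (F \<union> F\<inverse>) \<inter> ?U" "E \<union> E\<inverse> = F \<union> F\<inverse>"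
      unfolding upper_pairs_def by auto
    then show "E = F"
      by simp
  qed
  then have "card (?graph ` Pow ?U) = 2 ^ card ?U"
    using finite_upper_pairs[of "{0..<n}"] by (simp add: card_image card_Pow)
  moreover have "?graph ` Pow ?U \<subseteq> graphs_on n"
    unfolding graphs_on_def wf_graph_def upper_pairs_def sym_def by auto
  ultimately show ?thesis
    using card_mono[OF finite_graphs_on] by metis
qed

lemma card_graph_classes_ge:
  "2 ^ card (upper_pairs {0..<n}) \<le> card (graph_classes n) * fact n"
proof -
  have "graphs_on n = \<Union> (graph_classes n)"
    unfolding graph_classes_def using graph_iso_refl by blast
  then have "card (graphs_on n) \<le> (\<Sum>c\<in>graph_classes n. card c)"
    using card_Union_le_sum_card by metis
  also have "\<dots> \<le> card (graph_classes n) * fact n"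
  proof -
    have "card c \<le> fact n" if "c \<in> graph_classes n" for c
      using that card_iso_class_le_fact unfolding graph_classes_def by blast
    then show ?thesis
      using sum_bounded_above[of "graph_classes n" card "fact n"] by simp
  qed
  finally show ?thesis
    using card_graphs_on_ge[of n] by linarith
qed

definition degenerate_on :: "nat \<Rightarrow> graph \<Rightarrow> nat set \<Rightarrow> bool" where
  "degenerate_on k G B \<longleftrightarrow>
     (\<forall>A. A \<subseteq> B \<longrightarrow> A \<noteq> {} \<longrightarrow> (\<exists>v\<in>A. degree (induced G A) v \<le> k))"

lemma induced_induced: "A' \<subseteq> A \<Longrightarrow> induced (induced G A) A' = induced G A'"
  unfolding induced_def by auto

lemma k_degenerate_induced_imp_degenerate_on:
  assumes "k_degenerate k (induced G A)" "B \<subseteq> A"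
  shows "degenerate_on k G B"
  unfolding degenerate_on_def
proof (intro allI impI)
  fix A' assume A': "A' \<subseteq> B" "A' \<noteq> {}"
  then have "A' \<subseteq> fst (induced G A)"
    using assms(2) by (simp add: induced_def)
  then obtain v where "v \<in> A'" "degree (induced (induced G A) A') v \<le> k"
    using assms(1) A'(2) unfolding k_degenerate_def by blast
  then show "\<exists>v\<in>A'. degree (induced G A') v \<le> k"
    using A'(1) assms(2) induced_induced[of A' A G] by auto
qed

lemma card_edges_at_le_degree:
  assumes "finite B" "sym (snd G)"
  shows "card {e \<in> snd G \<inter> upper_pairs B. fst e = v \<or> snd e = v} \<le> degree (induced G B) v"
proof -
  let ?at_v = "{e \<in> snd G \<inter> upper_pairs B. fst e = v \<or> snd e = v}"
  let ?other_end = "\<lambda>e. if fst e = v then snd e else fst e"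
  have "inj_on ?other_end ?at_v"
    by (rule inj_onI) (auto simp: upper_pairs_def split: if_splits)
  moreover have "?other_end ` ?at_v \<subseteq> {u. (v, u) \<in> snd G \<inter> B \<times> B}"
    using assms(2) unfolding upper_pairs_def sym_def by (auto split: if_splits)
  moreover have "finite {u. (v, u) \<in> snd G \<inter> B \<times> B}"
    using assms(1) by (rule rev_finite_subset) auto
  ultimately have "card ?at_v \<le> card {u. (v, u) \<in> snd G \<inter> B \<times> B}"
    using card_inj_on_le by blast
  also have "\<dots> = degree (induced G B) v"
    unfolding degree_def induced_def by simp
  finally show ?thesis .
qed

text \<open>Peel off a vertex of degree at most \<open>k\<close>: it lies on at most \<open>k\<close> edges inside \<open>B\<close>.\<close>

lemma card_edges_within_le:
  assumes "finite B" "sym (snd G)" "degenerate_on k G B"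
  shows "card (snd G \<inter> upper_pairs B) \<le> k * card B"
  using assms(1,3)
proof (induction "card B" arbitrary: B)
  case 0
  then show ?case
    by (simp add: upper_pairs_def)
next
  case (Suc c)
  then have "B \<noteq> {}"
    by auto
  then obtain v where v: "v \<in> B" "degree (induced G B) v \<le> k"
    using Suc.prems(2) unfolding degenerate_on_def by blast
  let ?B' = "B - {v}"
  let ?at_v = "{e \<in> snd G \<inter> upper_pairs B. fst e = v \<or> snd e = v}"
  have c: "c = card ?B'"
    using Suc.hyps(2) Suc.prems(1) v(1) by simp
  have "degenerate_on k G ?B'"
    using Suc.prems(2) unfolding degenerate_on_def by blast
  then have IH: "card (snd G \<inter> upper_pairs ?B') \<le> k * card ?B'"
    using Suc.hyps(1)[OF c] Suc.prems(1) by simp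
  have at_v: "card ?at_v \<le> k"
    using card_edges_at_le_degree[OF Suc.prems(1) assms(2), of v] v(2) by linarith
  have "snd G \<inter> upper_pairs B \<subseteq> (snd G \<inter> upper_pairs ?B') \<union> ?at_v"
    unfolding upper_pairs_def by auto
  moreover have "finite (snd G \<inter> upper_pairs ?B')" "finite ?at_v"
    using finite_upper_pairs Suc.prems(1) by auto
  ultimately have "card (snd G \<inter> upper_pairs B) \<le> card ((snd G \<inter> upper_pairs ?B') \<union> ?at_v)"
    by (intro card_mono) auto
  also have "\<dots> \<le> card (snd G \<inter> upper_pairs ?B') + card ?at_v"
    by (rule card_Un_le)
  also have "\<dots> \<le> k * card ?B' + k"
    using IH at_v by simp
  also have "\<dots> = k * card B"
    using c Suc.hyps(2) by (metis mult_Suc_right add.commute)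
  finally show ?case .
qed

lemma card_subsets_card_le:
  assumes "finite W"
  shows "card {T. T \<subseteq> W \<and> card T \<le> t} \<le> (t + 1) * (card W + 1) ^ t"
proof -
  have "{T. T \<subseteq> W \<and> card T \<le> t} = (\<Union>i\<le>t. {T. T \<subseteq> W \<and> card T = i})"
    by auto
  then have "card {T. T \<subseteq> W \<and> card T \<le> t} \<le> (\<Sum>i\<le>t. card {T. T \<subseteq> W \<and> card T = i})"
    by (simp add: card_UN_le)
  also have "\<dots> = (\<Sum>i\<le>t. card W choose i)"
    using assms by (simp add: n_subsets)
  also have "\<dots> \<le> (\<Sum>i\<le>t. (card W + 1) ^ t)"
  proof (rule sum_mono)
    fix i assume "i \<in> {..t}"
    have "card W choose i \<le> (card W + 1) ^ i"
    proof (cases "i \<le> card W")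
      case True
      then have "card W choose i \<le> card W ^ i"
        by (rule binomial_le_pow)
      also have "\<dots> \<le> (card W + 1) ^ i"
        by (rule power_mono) auto
      finally show ?thesis .
    qed (simp add: binomial_eq_0)
    also have "\<dots> \<le> (card W + 1) ^ t"
      using \<open>i \<in> {..t}\<close> by (intro power_increasing) auto
    finally show "card W choose i \<le> (card W + 1) ^ t" .
  qed
  finally show ?thesis
    by simp
qed

lemma card_graphs_few_edges_within_le:
  assumes "B \<subseteq> {0..<n}"
  shows "card {G \<in> graphs_on n. card (snd G \<inter> upper_pairs B) \<le> t}
     \<le> (t + 1) * (card (upper_pairs B) + 1) ^ t
        * 2 ^ (card (upper_pairs {0..<n}) - card (upper_pairs B))"
proof -
  let ?U = "upper_pairs {0..<n}" and ?W = "upper_pairs B"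
  let ?S = "{G \<in> graphs_on n. card (snd G \<inter> ?W) \<le> t}"
  let ?split = "\<lambda>G. (snd G \<inter> ?W, snd G \<inter> (?U - ?W))"
  have WU: "?W \<subseteq> ?U"
    using assms by (rule upper_pairs_mono)
  have finU: "finite ?U" and finW: "finite ?W"
    using finite_upper_pairs finite_subset[OF WU] by auto
  have "inj_on ?split ?S"
  proof (rule inj_onI)
    fix G H assume G: "G \<in> ?S" and H: "H \<in> ?S" and eq: "?split G = ?split H"
    have "snd G \<inter> ?U = snd H \<inter> ?U"
      using eq WU by blast
    then have "snd G = snd H"
      using edges_eq_upper_edges_sym[of G n] edges_eq_upper_edges_sym[of H n] G H by simp
    moreover have "fst G = fst H"
      using G H unfolding graphs_on_def by simp
    ultimately show "G = H"
      by (simp add: prod_eq_iff)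
  qed
  moreover have "?split ` ?S \<subseteq> {T. T \<subseteq> ?W \<and> card T \<le> t} \<times> Pow (?U - ?W)"
    by auto
  moreover have "finite ({T. T \<subseteq> ?W \<and> card T \<le> t} \<times> Pow (?U - ?W))"
    using finU finW by auto
  ultimately have "card ?S \<le> card ({T. T \<subseteq> ?W \<and> card T \<le> t} \<times> Pow (?U - ?W))"
    using card_inj_on_le by blast
  also have "\<dots> = card {T. T \<subseteq> ?W \<and> card T \<le> t} * 2 ^ (card ?U - card ?W)"
    using finU finW WU by (simp add: card_cartesian_product card_Pow card_Diff_subset)
  also have "\<dots> \<le> (t + 1) * (card ?W + 1) ^ t * 2 ^ (card ?U - card ?W)"
    using card_subsets_card_le[OF finW, of t] by simp
  finally show ?thesis .
qed

definition large_Q_graphs :: "graph set \<Rightarrow> nat \<Rightarrow> nat \<Rightarrow> graph set" where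
  "large_Q_graphs Q m n =
     {G \<in> graphs_on n. \<exists>A. A \<subseteq> fst G \<and> induced G A \<in> Q \<and> m \<le> card A}"

lemma large_Q_graphs_subset_few_edges_within:
  assumes Q: "\<forall>G\<in>Q. wf_graph G \<and> k_degenerate k G"
  shows "large_Q_graphs Q m n
    \<subseteq> (\<Union>B\<in>{B. B \<subseteq> {0..<n} \<and> card B = m}.
          {G \<in> graphs_on n. card (snd G \<inter> upper_pairs B) \<le> k * m})"
proof
  fix G assume "G \<in> large_Q_graphs Q m n"
  then obtain A where G: "G \<in> graphs_on n" and A: "A \<subseteq> fst G" "induced G A \<in> Q" "m \<le> card A"
    unfolding large_Q_graphs_def by blast
  have V: "fst G = {0..<n}" and "sym (snd G)"
    using G unfolding graphs_on_def wf_graph_def by auto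
  obtain B where B: "B \<subseteq> A" "card B = m"
    using obtain_subset_with_card_n[OF A(3)] by metis
  have "finite B"
    using A(1) B(1) V finite_subset[of B "{0..<n}"] by auto
  moreover have "degenerate_on k G B"
    using k_degenerate_induced_imp_degenerate_on[OF _ B(1)] A(2) Q by blast
  ultimately have "card (snd G \<inter> upper_pairs B) \<le> k * card B"
    using card_edges_within_le \<open>sym (snd G)\<close> by blast
  then show "G \<in> (\<Union>B\<in>{B. B \<subseteq> {0..<n} \<and> card B = m}.
      {G \<in> graphs_on n. card (snd G \<inter> upper_pairs B) \<le> k * m})"
    using G B A(1) V by auto
qed

lemma card_large_Q_graphs_le:
  fixes m :: nat
  assumes Q: "\<forall>G\<in>Q. wf_graph G \<and> k_degenerate k G"
  defines "w \<equiv> card (upper_pairs {0..<m})"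
  shows "card (large_Q_graphs Q m n)
    \<le> (n choose m) * ((k * m + 1) * (w + 1) ^ (k * m) * 2 ^ (card (upper_pairs {0..<n}) - w))"
proof -
  let ?Bs = "{B. B \<subseteq> {0..<n} \<and> card B = m}"
  let ?few_edges = "\<lambda>B. {G \<in> graphs_on n. card (snd G \<inter> upper_pairs B) \<le> k * m}"
  let ?K = "(k * m + 1) * (w + 1) ^ (k * m) * 2 ^ (card (upper_pairs {0..<n}) - w)"
  have "card (large_Q_graphs Q m n) \<le> card (\<Union>B\<in>?Bs. ?few_edges B)"
    using large_Q_graphs_subset_few_edges_within[OF Q]
    by (rule card_mono[rotated]) (auto intro: finite_subset[OF _ finite_graphs_on])
  also have "\<dots> \<le> (\<Sum>B\<in>?Bs. card (?few_edges B))"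
    by (rule card_UN_le) simp
  also have "\<dots> \<le> (\<Sum>B\<in>?Bs. ?K)"
  proof (rule sum_mono)
    fix B assume B: "B \<in> ?Bs"
    then have "2 * card (upper_pairs B) + m = m * m"
      using card_upper_pairs[of B] finite_subset[of B "{0..<n}"] by auto
    moreover have "2 * w + m = m * m"
      using card_upper_pairs[of "{0..<m}"] unfolding w_def by simp
    ultimately have "card (upper_pairs B) = w"
      by linarith
    then show "card (?few_edges B) \<le> ?K"
      using card_graphs_few_edges_within_le[of B n "k * m"] B by simp
  qed
  also have "\<dots> = (n choose m) * ?K"
    by (simp add: n_subsets)
  finally show ?thesis .
qed

lemma coeff_indpoly:
  assumes "finite (fst G)"
  shows "coeff (indpoly Q G) j = card {A. A \<subseteq> fst G \<and> induced G A \<in> Q \<and> card A = j}"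
proof -
  let ?S = "{A. A \<subseteq> fst G \<and> induced G A \<in> Q}"
  have "finite ?S"
    using assms by (rule rev_finite_subset[OF finite_Pow_iff[THEN iffD2]]) auto
  then have "coeff (indpoly Q G) j = card {A \<in> ?S. card A = j}"
    unfolding indpoly_def coeff_sum coeff_monom by (simp add: sum.inter_filter[symmetric])
  then show ?thesis
    by (simp add: conj_assoc)
qed

definition bounded_polys :: "nat \<Rightarrow> nat \<Rightarrow> nat poly set" where
  "bounded_polys m c = {p. (\<forall>j\<ge>m. coeff p j = 0) \<and> (\<forall>j. coeff p j \<le> c)}"

lemma finite_card_bounded_polys:
  shows "finite (bounded_polys m c)" and "card (bounded_polys m c) \<le> (c + 1) ^ m"
proof -
  let ?coeffs = "\<lambda>p. restrict (coeff p) {..<m}"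
  have inj: "inj_on ?coeffs (bounded_polys m c)"
  proof (rule inj_onI)
    fix p q assume "p \<in> bounded_polys m c" "q \<in> bounded_polys m c" "?coeffs p = ?coeffs q"
    then have "coeff p j = coeff q j" for j
      unfolding bounded_polys_def by (cases "j < m") (auto dest: fun_cong[of _ _ j])
    then show "p = q"
      by (rule poly_eqI)
  qed
  have img: "?coeffs ` bounded_polys m c \<subseteq> PiE {..<m} (\<lambda>_. {0..c})"
  proof (rule image_subsetI)
    fix p assume "p \<in> bounded_polys m c"
    then show "?coeffs p \<in> PiE {..<m} (\<lambda>_. {0..c})"
      unfolding bounded_polys_def by (intro iffD2[OF restrict_PiE_iff]) simp
  qed
  show "finite (bounded_polys m c)"
    using finite_imageD[OF finite_subset[OF img] inj] by (simp add: finite_PiE)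
  have "card (bounded_polys m c) \<le> card (PiE {..<m} (\<lambda>_. {0..c}))"
    using card_inj_on_le[OF inj img] by (simp add: finite_PiE)
  then show "card (bounded_polys m c) \<le> (c + 1) ^ m"
    by (simp add: card_PiE)
qed

lemma indpoly_in_bounded_polys:
  assumes G: "G \<in> graphs_on n" "G \<notin> large_Q_graphs Q m n"
  shows "indpoly Q G \<in> bounded_polys m (2 ^ n)"
proof -
  let ?layer = "\<lambda>j. {A. A \<subseteq> fst G \<and> induced G A \<in> Q \<and> card A = j}"
  have V: "fst G = {0..<n}"
    using G(1) unfolding graphs_on_def by auto
  then have coeff_eq: "coeff (indpoly Q G) j = card (?layer j)" for j
    by (simp add: coeff_indpoly)
  have layer_empty: "?layer j = {}" if "m \<le> j" for j
    using G that unfolding large_Q_graphs_def by auto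
  have "coeff (indpoly Q G) j = 0" if "m \<le> j" for j
    by (simp only: coeff_eq layer_empty[OF that] card.empty)
  moreover have "card (?layer j) \<le> card (Pow {0..<n})" for j
    using V by (intro card_mono) auto
  then have "coeff (indpoly Q G) j \<le> 2 ^ n" for j
    using coeff_eq by (simp add: card_Pow)
  ultimately show ?thesis
    unfolding bounded_polys_def by blast
qed

definition unique_rep :: "(graph \<Rightarrow> 'b) \<Rightarrow> graph set \<Rightarrow> graph" where
  "unique_rep P c = (SOME G. G \<in> c \<and> P_unique P G)"

lemma unique_rep:
  assumes "c \<in> unique_classes P n"
  shows "unique_rep P c \<in> c" "P_unique P (unique_rep P c)"
    and "c \<in> graph_classes n" "unique_rep P c \<in> graphs_on n"
proof -
  have "\<exists>G. G \<in> c \<and> P_unique P G"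
    using assms unfolding unique_classes_def by blast
  from someI_ex[OF this] show "unique_rep P c \<in> c" "P_unique P (unique_rep P c)"
    unfolding unique_rep_def by blast+
  show "c \<in> graph_classes n"
    using assms unfolding unique_classes_def by auto
  then show "unique_rep P c \<in> graphs_on n"
    using \<open>unique_rep P c \<in> c\<close> unfolding graph_classes_def by auto
qed

lemma inj_on_unique_rep: "inj_on (unique_rep P) (unique_classes P n)"
proof (rule inj_onI)
  fix c d assume c: "c \<in> unique_classes P n" and d: "d \<in> unique_classes P n"
    and "unique_rep P c = unique_rep P d"
  then have "unique_rep P c \<in> d"
    using unique_rep(1)[OF d] by simp
  then show "c = d"
    using graph_classes_eqI[OF unique_rep(3)[OF c] unique_rep(3)[OF d] unique_rep(1)[OF c]]
      graph_iso_refl by blast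
qed

lemma inj_on_comp_unique_rep: "inj_on (P \<circ> unique_rep P) (unique_classes P n)"
proof (rule inj_onI)
  fix c d assume c: "c \<in> unique_classes P n" and d: "d \<in> unique_classes P n"
    and eq: "(P \<circ> unique_rep P) c = (P \<circ> unique_rep P) d"
  have "wf_graph (unique_rep P d)"
    using unique_rep(4)[OF d] unfolding graphs_on_def by simp
  moreover have "P (unique_rep P d) = P (unique_rep P c)"
    using eq by simp
  ultimately have "graph_iso (unique_rep P c) (unique_rep P d)"
    using unique_rep(2)[OF c] unfolding P_unique_def by blast
  then show "c = d"
    by (rule graph_classes_eqI[OF unique_rep(3)[OF c] unique_rep(3)[OF d]
          unique_rep(1)[OF c] unique_rep(1)[OF d]])
qed

text \<open>Unique classes whose representative lies in \<open>S\<close> are counted by the representative,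
  the others by the value of \<open>P\<close>.\<close>

lemma card_unique_classes_le:
  assumes S: "S \<subseteq> graphs_on n"
  shows "card (unique_classes P n) \<le> card S + card (P ` (graphs_on n - S))"
proof -
  let ?UC = "unique_classes P n"
  let ?in_S = "{c \<in> ?UC. unique_rep P c \<in> S}" and ?off_S = "{c \<in> ?UC. unique_rep P c \<notin> S}"
  have "card ?in_S \<le> card S"
  proof (rule card_inj_on_le)
    show "inj_on (unique_rep P) ?in_S"
      using inj_on_unique_rep by (rule inj_on_subset) blast
    show "finite S"
      using S finite_graphs_on by (rule finite_subset)
  qed auto
  moreover have "card ?off_S \<le> card (P ` (graphs_on n - S))"
  proof (rule card_inj_on_le)
    show "inj_on (P \<circ> unique_rep P) ?off_S"
      using inj_on_comp_unique_rep by (rule inj_on_subset) blast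
    show "(P \<circ> unique_rep P) ` ?off_S \<subseteq> P ` (graphs_on n - S)"
      using unique_rep(4) by auto
  qed (simp add: finite_graphs_on)
  moreover have "card ?UC = card (?in_S \<union> ?off_S)"
    by (rule arg_cong[where f = card]) blast
  then have "card ?UC \<le> card ?in_S + card ?off_S"
    using card_Un_le by (rule ord_eq_le_trans)
  ultimately show ?thesis
    by linarith
qed

lemma card_unique_classes_indpoly_le:
  "card (unique_classes (indpoly Q) n) \<le> card (large_Q_graphs Q m n) + (2 ^ n + 1) ^ m"
proof -
  have "indpoly Q ` (graphs_on n - large_Q_graphs Q m n) \<subseteq> bounded_polys m (2 ^ n)"
    using indpoly_in_bounded_polys by auto
  then have "card (indpoly Q ` (graphs_on n - large_Q_graphs Q m n)) \<le> card (bounded_polys m (2 ^ n))"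
    by (rule card_mono[OF finite_card_bounded_polys(1)])
  also have "\<dots> \<le> (2 ^ n + 1) ^ m"
    by (rule finite_card_bounded_polys(2))
  finally have "card (indpoly Q ` (graphs_on n - large_Q_graphs Q m n)) \<le> (2 ^ n + 1) ^ m" .
  moreover have "large_Q_graphs Q m n \<subseteq> graphs_on n"
    unfolding large_Q_graphs_def by auto
  ultimately show ?thesis
    using card_unique_classes_le[of "large_Q_graphs Q m n" n "indpoly Q"] by linarith
qed

lemma choose_mult_fact_le_power:
  fixes n m k w :: nat
  assumes n: "2 \<le> n" and m: "m < n" and w: "w \<le> m * m"
  shows "(n choose m) * (k * m + 1) * (w + 1) ^ (k * m) * fact n \<le> n ^ ((3 * k + 2) * n)"
proof -
  have "n choose m \<le> n ^ m"
    using m by (intro binomial_le_pow) simp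
  also have "\<dots> \<le> n ^ n"
    using m n by (intro power_increasing) auto
  finally have choose: "n choose m \<le> n ^ n" .
  have "k * m + 1 \<le> 2 ^ (k * m)"
    using less_exp[of "k * m"] by (simp add: Suc_le_eq)
  also have "\<dots> \<le> n ^ (k * m)"
    using n by (intro power_mono) auto
  also have "\<dots> \<le> n ^ (k * n)"
    using m n by (intro power_increasing) auto
  finally have linear: "k * m + 1 \<le> n ^ (k * n)" .
  have "m * m < n * n"
    using m by (simp add: mult_strict_mono)
  then have "(w + 1) ^ (k * m) \<le> (n * n) ^ (k * m)"
    using w by (intro power_mono) auto
  also have "\<dots> \<le> n ^ (2 * k * n)"
    using m n by (simp add: power_mult[symmetric] power2_eq_square[symmetric] mult.assoc
        power_increasing)
  finally have power: "(w + 1) ^ (k * m) \<le> n ^ (2 * k * n)" .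
  have "(n choose m) * (k * m + 1) * (w + 1) ^ (k * m) * fact n
      \<le> n ^ n * n ^ (k * n) * n ^ (2 * k * n) * n ^ n"
    using choose linear power fact_le_power[of n, where 'a = nat] by (intro mult_mono) auto
  also have "\<dots> = n ^ ((3 * k + 2) * n)"
    by (simp add: power_add[symmetric] algebra_simps)
  finally show ?thesis .
qed

lemma card_large_Q_graphs_mult_fact_le:
  assumes Q: "\<forall>G\<in>Q. wf_graph G \<and> k_degenerate k G" and n: "2 \<le> n" and m: "m < n"
  defines "w \<equiv> card (upper_pairs {0..<m})"
  shows "card (large_Q_graphs Q m n) * fact n
    \<le> n ^ ((3 * k + 2) * n) * 2 ^ (card (upper_pairs {0..<n}) - w)"
proof -
  let ?u = "card (upper_pairs {0..<n})"
  have "2 * w + m = m * m"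
    using card_upper_pairs[of "{0..<m}"] unfolding w_def by simp
  then have crude: "(n choose m) * (k * m + 1) * (w + 1) ^ (k * m) * fact n \<le> n ^ ((3 * k + 2) * n)"
    using n m by (intro choose_mult_fact_le_power) auto
  have "card (large_Q_graphs Q m n) * fact n
      \<le> (n choose m) * ((k * m + 1) * (w + 1) ^ (k * m) * 2 ^ (?u - w)) * fact n"
    using card_large_Q_graphs_le[OF Q, of m n] unfolding w_def by (rule mult_right_mono) simp
  also have "\<dots> = (n choose m) * (k * m + 1) * (w + 1) ^ (k * m) * fact n * 2 ^ (?u - w)"
    by (simp only: ac_simps)
  also have "\<dots> \<le> n ^ ((3 * k + 2) * n) * 2 ^ (?u - w)"
    using crude by (rule mult_right_mono) simp
  finally show ?thesis .
qed

lemma card_upper_pairs_quarter_ge: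
  assumes "16 \<le> n"
  shows "real n ^ 2 / 128 \<le> real (card (upper_pairs {0..<n div 4}))"
proof -
  let ?m = "n div 4" and ?w = "card (upper_pairs {0..<n div 4})"
  have "2 * ?w + ?m = ?m * ?m"
    using card_upper_pairs[of "{0..<?m}"] by simp
  then have w: "2 * real ?w + real ?m = real ?m * real ?m"
    by (metis of_nat_add of_nat_mult of_nat_numeral)
  have "n \<le> 4 * ?m + 3" "4 \<le> ?m"
    using assms by linarith+
  then have n_le: "real n \<le> 4 * real ?m + 3" and m_ge: "4 \<le> real ?m"
    by simp_all
  have "real n * real n \<le> (4 * real ?m + 3) * (4 * real ?m + 3)"
    using n_le by (intro mult_mono) auto
  then have sq: "real n * real n \<le> 16 * (real ?m * real ?m) + 24 * real ?m + 9"
    by (simp add: algebra_simps)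
  have "4 * real ?m \<le> real ?m * real ?m"
    using m_ge by (intro mult_right_mono) auto
  then show ?thesis
    unfolding power2_eq_square using sq w m_ge by linarith
qed

lemma quarter_exponent_le:
  "real ((n + 1) * (n div 4)) - real (card (upper_pairs {0..<n}))
    \<le> - (real n ^ 2 - 3 * real n) / 4"
proof -
  let ?m = "n div 4" and ?u = "card (upper_pairs {0..<n})"
  have "2 * ?u + n = n * n"
    using card_upper_pairs[of "{0..<n}"] by simp
  then have u: "2 * real ?u + real n = real n * real n"
    by (metis of_nat_add of_nat_mult of_nat_numeral)
  have "4 * real ?m \<le> real n"
    by linarith
  then have "(real n + 1) * (4 * real ?m) \<le> (real n + 1) * real n"
    by (intro mult_left_mono) auto
  then show ?thesis
    using u by (simp add: power2_eq_square algebra_simps)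
qed

lemma card_unique_classes_mult_fact_le:
  fixes n :: nat
  assumes Q: "\<forall>G\<in>Q. wf_graph G \<and> k_degenerate k G" and n: "2 \<le> n"
  defines "m \<equiv> n div 4"
  shows "card (unique_classes (indpoly Q) n) * fact n
    \<le> n ^ ((3 * k + 2) * n) * 2 ^ (card (upper_pairs {0..<n}) - card (upper_pairs {0..<m}))
      + 2 ^ ((n + 1) * m) * n ^ n"
proof -
  have large: "card (large_Q_graphs Q m n) * fact n
      \<le> n ^ ((3 * k + 2) * n) * 2 ^ (card (upper_pairs {0..<n}) - card (upper_pairs {0..<m}))"
    using n by (intro card_large_Q_graphs_mult_fact_le[OF Q]) (auto simp: m_def)
  have "(2 ^ n + 1) ^ m \<le> (2 ^ (n + 1) :: nat) ^ m"
    by (intro power_mono) auto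
  also have "\<dots> = 2 ^ ((n + 1) * m)"
    by (rule power_mult[symmetric])
  finally have small: "(2 ^ n + 1) ^ m * fact n \<le> 2 ^ ((n + 1) * m) * n ^ n"
    using fact_le_power[of n, where 'a = nat] by (intro mult_mono) auto
  have "card (unique_classes (indpoly Q) n) * fact n
      \<le> (card (large_Q_graphs Q m n) + (2 ^ n + 1) ^ m) * fact n"
    using card_unique_classes_indpoly_le by (rule mult_right_mono) simp
  then show ?thesis
    using large small by (simp add: distrib_right)
qed

lemma power_terms_le_powr_bound:
  fixes n k :: nat
  assumes n: "16 \<le> n"
  defines "m \<equiv> n div 4" and "u \<equiv> card (upper_pairs {0..<n})"
  shows "real n ^ ((3 * k + 2) * n) / 2 ^ card (upper_pairs {0..<m})
      + real n ^ n * 2 powr (real ((n + 1) * m) - real u)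
    \<le> real n powr ((3 * real k + 2) * real n) / 2 powr (real n ^ 2 / 128)
      + real n powr real n * 2 powr (- (real n ^ 2 - 3 * real n) / 4)"
proof (intro add_mono)
  let ?w = "card (upper_pairs {0..<m})"
  have "real n ^ ((3 * k + 2) * n) = real n powr real ((3 * k + 2) * n)" "(2::real) ^ ?w = 2 powr real ?w"
    using n by (subst powr_realpow; simp)+
  moreover have "real ((3 * k + 2) * n) = (3 * real k + 2) * real n"
    by (simp add: algebra_simps)
  moreover have "2 powr (real n ^ 2 / 128) \<le> (2::real) powr real ?w"
    using card_upper_pairs_quarter_ge[OF n] unfolding m_def by simp
  ultimately show "real n ^ ((3 * k + 2) * n) / 2 ^ ?w
      \<le> real n powr ((3 * real k + 2) * real n) / 2 powr (real n ^ 2 / 128)"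
    by (simp add: frac_le)
  have "real n ^ n = real n powr real n"
    using n by (simp add: powr_realpow)
  moreover have "2 powr (real ((n + 1) * m) - real u) \<le> (2::real) powr (- (real n ^ 2 - 3 * real n) / 4)"
    using quarter_exponent_le[of n] unfolding u_def m_def by simp
  ultimately show "real n ^ n * 2 powr (real ((n + 1) * m) - real u)
      \<le> real n powr real n * 2 powr (- (real n ^ 2 - 3 * real n) / 4)"
    by (simp add: mult_left_mono)
qed

lemma unique_classes_ratio_le:
  assumes Q: "\<forall>G\<in>Q. wf_graph G \<and> k_degenerate k G" and n: "16 \<le> n"
  shows "real (card (unique_classes (indpoly Q) n)) / real (card (graph_classes n))
    \<le> real n powr ((3 * real k + 2) * real n) / 2 powr (real n ^ 2 / 128)
      + real n powr real n * 2 powr (- (real n ^ 2 - 3 * real n) / 4)"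
proof -
  define m where "m = n div 4"
  define u where "u = card (upper_pairs {0..<n})"
  define w where "w = card (upper_pairs {0..<m})"
  define N where "N = (3 * k + 2) * n"
  let ?UC = "card (unique_classes (indpoly Q) n)" and ?cls = "card (graph_classes n)"
  have "w \<le> u"
    unfolding u_def w_def m_def by (intro card_mono finite_upper_pairs upper_pairs_mono) auto
  have "?UC * fact n \<le> n ^ N * 2 ^ (u - w) + 2 ^ ((n + 1) * m) * n ^ n"
    unfolding N_def u_def w_def m_def using n by (intro card_unique_classes_mult_fact_le[OF Q]) auto
  then have "real (?UC * fact n) \<le> real (n ^ N * 2 ^ (u - w) + 2 ^ ((n + 1) * m) * n ^ n)"
    by (simp only: of_nat_le_iff)
  then have count: "real ?UC * fact n \<le> real n ^ N * 2 ^ (u - w) + 2 ^ ((n + 1) * m) * real n ^ n"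
    by simp
  have "real (2 ^ u) \<le> real (?cls * fact n)"
    unfolding u_def by (simp only: of_nat_le_iff card_graph_classes_ge)
  then have classes: "2 ^ u \<le> real ?cls * fact n"
    by simp
  then have cls_pos: "0 < real ?cls * fact n"
    by (rule order_less_le_trans[rotated]) simp
  have "real ?UC / real ?cls = real ?UC * fact n / (real ?cls * fact n)"
    by simp
  also have "\<dots> \<le> real ?UC * fact n / 2 ^ u"
    using classes cls_pos by (intro divide_left_mono) auto
  also have "\<dots> \<le> (real n ^ N * 2 ^ (u - w) + 2 ^ ((n + 1) * m) * real n ^ n) / 2 ^ u"
    using count by (simp add: divide_right_mono)
  also have "\<dots> = real n ^ N / 2 ^ w + real n ^ n * (2 ^ ((n + 1) * m) / 2 ^ u)"
    using \<open>w \<le> u\<close> by (simp add: power_diff add_divide_distrib)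
  also have "\<dots> = real n ^ N / 2 ^ w + real n ^ n * 2 powr (real ((n + 1) * m) - real u)"
    unfolding powr_diff by (simp only: powr_realpow zero_less_numeral)
  also have "\<dots> \<le> real n powr ((3 * real k + 2) * real n) / 2 powr (real n ^ 2 / 128)
      + real n powr real n * 2 powr (- (real n ^ 2 - 3 * real n) / 4)"
    using power_terms_le_powr_bound[OF n, of k] unfolding N_def u_def w_def m_def .
  finally show ?thesis .
qed

theorem corollary1:
  fixes k :: nat and Q :: "graph set"
  assumes "\<forall>G\<in>Q. wf_graph G \<and> k_degenerate k G"
    and "\<forall>G H. wf_graph G \<longrightarrow> wf_graph H \<longrightarrow> graph_iso G H \<longrightarrow> G \<in> Q \<longrightarrow> H \<in> Q"
  shows "weakly_distinguishing (indpoly Q)"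
  unfolding weakly_distinguishing_def
proof (rule tendsto_sandwich[OF _ _ tendsto_const])
  let ?bound = "\<lambda>n::nat. real n powr ((3 * real k + 2) * real n) / 2 powr (real n ^ 2 / 128)
      + real n powr real n * 2 powr (- (real n ^ 2 - 3 * real n) / 4)"
  show "\<forall>\<^sub>F n in sequentially.
      0 \<le> real (card (unique_classes (indpoly Q) n)) / real (card (graph_classes n))"
    by simp
  show "\<forall>\<^sub>F n in sequentially.
      real (card (unique_classes (indpoly Q) n)) / real (card (graph_classes n)) \<le> ?bound n"
    using unique_classes_ratio_le[OF assms(1)] by (intro eventually_sequentiallyI[of 16])
  show "?bound \<longlonglongrightarrow> 0"
    by real_asymp
qed

end
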